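(* Let $(w,d,N,L)$ be a stable, reduced Levi–Schubert quadruple, let $\underline\theta$ be a standard degree $r$ head of type $L$, and fix $1\le k\le b_L$. Then in the tableau $T_{\underline\theta}$: (1) boxes with entries in $\mathrm{Bl}_k$ occur only in rows with index $\ge h_1+\dots+h_{k-1}+1$; (2) boxes with entries smaller than the elements of $\mathrm{Bl}_k$ occur only in rows with index $\le N_1+\dots+N_{k-1}$; (3) if $p$ is a positive integer with $h_{k+1}+\dots+h_{b_L}<p$, then boxes with entries larger than the elements of $\mathrm{Bl}_k$ occur only in the bottom $p-1$ rows (rows $d-p+2,\dots,d$).
   Context: $G_{d,N}$ is the complex Grassmannian; $B\subset GL_N$ upper triangular. $I_{d,N}$ is the set of sequences $(i_1<\dots<i_d)$ in $\{1,\dots,N\}$, ordered componentwise. For $w=(\ell_1,\dots,\ell_d)\in I_{d,N}$, $X(w)$ is the closure of $B\cdot[e_{\ell_1}\wedge\dots\wedge e_{\ell_d}]$. A standard Levi $L\subseteq GL_N$ is given by $0=j_0<j_1<\dots<j_{b_L}=N$: invertible block diagonal matrices with blocks of sizes $N_k=j_k-j_{k-1}$; blocks $\mathrm{Bl}_k=\{j_{k-1}+1,\dots,j_k\}$. A Levi–Schubert quadruple $(w,d,N,L)$ is stable if $X(w)$ is $L$-stable under left multiplication, reduced if $\ell_1\ne1$ and $\ell_d=N$; $h_k=|\{j:\ell_j\in\mathrm{Bl}_k\}|$. A degree 1 head of type $L$ is $\theta\in I_{d,N}$ with $\theta\le w$ such that for each $k$ the entries of $\theta$ in $\mathrm{Bl}_k$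 are the largest elements of $\mathrm{Bl}_k$. A standard degree $r$ head is $(\theta_1,\dots,\theta_r)$, degree 1 heads with $\theta_1\ge\dots\ge\theta_r$; its tableau $T_{\underline\theta}$ has $d$ rows and $r$ columns, column $c$ listing top to bottom the (increasing) entries of $\theta_{r-c+1}$; rows are numbered $1,\dots,d$ from the top. *)

theory Defs
  imports "Jordan_Normal_Form.DL_Rank"
begin

(* ---------- Linear algebra over C^N (vectors indexed 0..N-1;
   the standard basis vector e_l, 1 <= l <= N, has its 1 at index l-1) ---------- *)

abbreviation CN :: "nat \<Rightarrow> (complex, complex vec) module" where
  "CN N \<equiv> module_vec TYPE(complex) N"

definition cdim :: "nat \<Rightarrow> complex vec set \<Rightarrow> nat" where
  "cdim N W = vectorspace.dim class_ring ((CN N)\<lparr>carrier := W\<rparr>)"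

definition grass :: "nat \<Rightarrow> nat \<Rightarrow> complex vec set set" where
  "grass d N = {V. subspace class_ring V (CN N) \<and> cdim N V = d}"

(* standard flag: F_i = span(e_1,...,e_i) *)
definition flag :: "nat \<Rightarrow> nat \<Rightarrow> complex vec set" where
  "flag N i = {v \<in> carrier_vec N. \<forall>t<N. i \<le> t \<longrightarrow> v $ t = 0}"

definition Idn :: "nat \<Rightarrow> nat \<Rightarrow> nat list set" where
  "Idn d N = {w. length w = d \<and> sorted_wrt (<) w \<and> set w \<subseteq> {1..N}}"

definition cle :: "nat list \<Rightarrow> nat list \<Rightarrow> bool" where
  "cle u w \<longleftrightarrow> length u = length w \<and> (\<forall>t<length w. u ! t \<le> w ! t)"

(* Schubert variety X(w) = closure of B.[e_{l_1} ^ ... ^ e_{l_d}], described by the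
   Schubert incidence conditions dim(V \<inter> F_{l_j}) >= j *)
definition schubert :: "nat \<Rightarrow> nat list \<Rightarrow> complex vec set set" where
  "schubert N w = {V \<in> grass (length w) N.
      \<forall>j\<in>{1..length w}. j \<le> cdim N (V \<inter> flag N (w ! (j - 1)))}"

definition levi_data :: "nat \<Rightarrow> (nat \<Rightarrow> nat) \<Rightarrow> nat \<Rightarrow> bool" where
  "levi_data N j b \<longleftrightarrow> 1 \<le> b \<and> j 0 = 0 \<and> j b = N \<and> (\<forall>k<b. j k < j (Suc k))"

definition Bl :: "(nat \<Rightarrow> nat) \<Rightarrow> nat \<Rightarrow> nat set" where
  "Bl j k = {j (k - 1) + 1 .. j k}"

definition Nblk :: "(nat \<Rightarrow> nat) \<Rightarrow> nat \<Rightarrow> nat" where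
  "Nblk j k = j k - j (k - 1)"

definition levi :: "nat \<Rightarrow> (nat \<Rightarrow> nat) \<Rightarrow> nat \<Rightarrow> complex mat set" where
  "levi N j b = {g \<in> carrier_mat N N. det g \<noteq> 0 \<and>
      (\<forall>p<N. \<forall>q<N. g $$ (p, q) \<noteq> 0 \<longrightarrow>
          (\<exists>k\<in>{1..b}. Suc p \<in> Bl j k \<and> Suc q \<in> Bl j k))}"

definition act :: "complex mat \<Rightarrow> complex vec set \<Rightarrow> complex vec set" where
  "act g V = (\<lambda>v. g *\<^sub>v v) ` V"

definition ls_quadruple :: "nat list \<Rightarrow> nat \<Rightarrow> nat \<Rightarrow> (nat \<Rightarrow> nat) \<Rightarrow> nat \<Rightarrow> bool" where
  "ls_quadruple w d N j b \<longleftrightarrow> w \<in> Idn d N \<and> levi_data N j b"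

definition ls_stable :: "nat list \<Rightarrow> nat \<Rightarrow> (nat \<Rightarrow> nat) \<Rightarrow> nat \<Rightarrow> bool" where
  "ls_stable w N j b \<longleftrightarrow> (\<forall>g\<in>levi N j b. \<forall>V\<in>schubert N w. act g V \<in> schubert N w)"

definition reduced :: "nat list \<Rightarrow> nat \<Rightarrow> bool" where
  "reduced w N \<longleftrightarrow> w \<noteq> [] \<and> hd w \<noteq> 1 \<and> last w = N"

definition hcount :: "nat list \<Rightarrow> (nat \<Rightarrow> nat) \<Rightarrow> nat \<Rightarrow> nat" where
  "hcount w j k = card {t. t < length w \<and> w ! t \<in> Bl j k}"

definition head1 :: "nat list \<Rightarrow> nat \<Rightarrow> nat \<Rightarrow> (nat \<Rightarrow> nat) \<Rightarrow> nat \<Rightarrow> nat list \<Rightarrow> bool" where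
  "head1 w d N j b \<theta> \<longleftrightarrow> \<theta> \<in> Idn d N \<and> cle \<theta> w \<and>
     (\<forall>k\<in>{1..b}. \<forall>x\<in>set \<theta> \<inter> Bl j k. \<forall>y\<in>Bl j k. x < y \<longrightarrow> y \<in> set \<theta>)"

(* standard degree r head (theta_1,...,theta_r), stored as list with theta_i = ths ! (i-1) *)
definition std_head :: "nat list \<Rightarrow> nat \<Rightarrow> nat \<Rightarrow> (nat \<Rightarrow> nat) \<Rightarrow> nat \<Rightarrow> nat \<Rightarrow> nat list list \<Rightarrow> bool" where
  "std_head w d N j b r ths \<longleftrightarrow> length ths = r \<and> (\<forall>i<r. head1 w d N j b (ths ! i)) \<and>
     (\<forall>i. Suc i < r \<longrightarrow> cle (ths ! (Suc i)) (ths ! i))"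

(* entry of the tableau T_theta in row i (1..d, from top) and column c (1..r):
   column c lists the entries of theta_{r-c+1} *)
definition tab :: "nat list list \<Rightarrow> nat \<Rightarrow> nat \<Rightarrow> nat" where
  "tab ths i c = (ths ! (length ths - c)) ! (i - 1)"

end

theory Submission
  imports Defs
begin

text \<open>An entry in or above block \<open>Bl\<^sub>k\<close> in row \<open>i\<close> forces \<open>w\<^sub>i\<close> to exceed
  \<open>j\<^sub>k\<^sub>-\<^sub>1\<close>, resp. \<open>j\<^sub>k\<close>; since \<open>w\<close> is strictly increasing, this bounds the number of entries of
  \<open>w\<close> in the blocks before \<open>Bl\<^sub>k\<close> by \<open>i - 1\<close>, resp. the number in the blocks after it from below
  by \<open>d - i + 1\<close>. An entry below \<open>Bl\<^sub>k\<close> is at most \<open>j\<^sub>k\<^sub>-\<^sub>1\<close>, and the \<open>i\<close>-th entry of a strictly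
  increasing sequence of positive integers is at least \<open>i\<close>.\<close>

lemma levi_data_mono:
  assumes "levi_data N j b" "m \<le> n" "n \<le> b"
  shows "j m \<le> j n"
  using assms(2,3)
proof (induction n)
  case 0
  then show ?case by simp
next
  case (Suc n)
  have "j n < j (Suc n)" using assms(1) Suc.prems by (auto simp: levi_data_def)
  then show ?case using Suc by (cases "m = Suc n") auto
qed

lemma levi_data_block_nonempty:
  assumes "levi_data N j b" "k \<in> {1..b}"
  shows "j (k - 1) < j k"
  using assms by (cases k) (auto simp: levi_data_def)

lemma sum_Nblk_eq:
  assumes "levi_data N j b" "n \<le> b"
  shows "(\<Sum>t=1..n. Nblk j t) = j n"
  using assms(2)
proof (induction n)
  case 0
  then show ?case using assms(1) by (simp add: levi_data_def)
next
  case (Suc n)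
  have "j n < j (Suc n)" using assms(1) Suc.prems by (auto simp: levi_data_def)
  then show ?case using Suc by (simp add: Nblk_def)
qed

lemma sum_hcount_eq_card:
  assumes "levi_data N j b" "m \<le> n" "n \<le> b"
  shows "(\<Sum>t=m+1..n. hcount w j t) = card {t. t < length w \<and> w ! t \<in> {j m<..j n}}"
  using assms(2,3)
proof (induction n)
  case 0
  then show ?case by simp
next
  case (Suc n)
  show ?case
  proof (cases "m = Suc n")
    case True
    then show ?thesis by simp
  next
    case False
    then have "m \<le> n" using Suc.prems by simp
    have "j m \<le> j n" using levi_data_mono[OF assms(1) \<open>m \<le> n\<close>] Suc.prems by simp
    moreover have "j n < j (Suc n)" using assms(1) Suc.prems by (auto simp: levi_data_def)
    ultimately have split: "{j m<..j (Suc n)} = {j m<..j n} \<union> Bl j (Suc n)"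
      and disj: "{j m<..j n} \<inter> Bl j (Suc n) = {}"
      by (auto simp: Bl_def)
    have "(\<Sum>t=m+1..Suc n. hcount w j t) = (\<Sum>t=m+1..n. hcount w j t) + hcount w j (Suc n)"
      using \<open>m \<le> n\<close> by simp
    also have "\<dots> = card {t. t < length w \<and> w ! t \<in> {j m<..j n}}
        + card {t. t < length w \<and> w ! t \<in> Bl j (Suc n)}"
      using Suc \<open>m \<le> n\<close> by (simp add: hcount_def)
    also have "\<dots> = card ({t. t < length w \<and> w ! t \<in> {j m<..j n}}
        \<union> {t. t < length w \<and> w ! t \<in> Bl j (Suc n)})"
      using disj by (intro card_Un_disjoint[symmetric]) auto
    also have "\<dots> = card {t. t < length w \<and> w ! t \<in> {j m<..j (Suc n)}}"
      unfolding split by (intro arg_cong[where f = card]) auto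
    finally show ?thesis .
  qed
qed

lemma card_nth_le_below_index:
  fixes xs :: "'a::linorder list"
  assumes "sorted xs" "i < length xs" "a < xs ! i"
  shows "card {t. t < length xs \<and> xs ! t \<le> a} \<le> i"
proof -
  have "{t. t < length xs \<and> xs ! t \<le> a} \<subseteq> {..<i}"
  proof (intro subsetI)
    fix t
    assume t: "t \<in> {t. t < length xs \<and> xs ! t \<le> a}"
    have "xs ! i \<le> xs ! t" if "i \<le> t"
      using sorted_nth_mono[OF assms(1) that] t by simp
    then show "t \<in> {..<i}" using t assms(3) by force
  qed
  then show ?thesis using card_mono[of "{..<i}"] by simp
qed

lemma card_nth_gt_from_index:
  fixes xs :: "'a::linorder list"
  assumes "sorted xs" "i < length xs" "a < xs ! i"
  shows "length xs - i \<le> card {t. t < length xs \<and> a < xs ! t}"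
proof -
  have "{i..<length xs} \<subseteq> {t. t < length xs \<and> a < xs ! t}"
    using sorted_nth_mono[OF assms(1)] assms(3)
    by (force intro: order.strict_trans2)
  then have "card {i..<length xs} \<le> card {t. t < length xs \<and> a < xs ! t}"
    by (intro card_mono) auto
  then show ?thesis by simp
qed

lemma Idn_nth_ge_index:
  assumes "\<theta> \<in> Idn d N" "i \<in> {1..d}"
  shows "i \<le> \<theta> ! (i - 1)"
proof -
  have "sorted_wrt (<) (0 # \<theta>)" and "length \<theta> = d"
    using assms(1) by (auto simp: Idn_def)
  then show ?thesis using sorted_wrt_less_idx[of "0 # \<theta>" i] assms(2) by simp
qed

lemma std_head_tab_column:
  assumes "std_head w d N j b r ths" "c \<in> {1..r}"
  shows "tab ths i c = ths ! (r - c) ! (i - 1)" and "ths ! (r - c) \<in> Idn d N"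
    and "cle (ths ! (r - c)) w"
proof -
  have "head1 w d N j b (ths ! (r - c))"
    using assms by (auto simp: std_head_def)
  then show "ths ! (r - c) \<in> Idn d N" and "cle (ths ! (r - c)) w"
    by (auto simp: head1_def)
  show "tab ths i c = ths ! (r - c) ! (i - 1)"
    using assms(1) by (simp add: tab_def std_head_def)
qed

lemma std_head_tab_le:
  assumes "std_head w d N j b r ths" "i \<in> {1..d}" "c \<in> {1..r}"
  shows "tab ths i c \<le> w ! (i - 1)"
  using std_head_tab_column[OF assms(1,3)] assms(2) by (auto simp: cle_def Idn_def)

lemma std_head_tab_ge_row:
  assumes "std_head w d N j b r ths" "i \<in> {1..d}" "c \<in> {1..r}"
  shows "i \<le> tab ths i c"
  using std_head_tab_column[OF assms(1,3)] Idn_nth_ge_index assms(2) by simp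

lemma entry_in_block_row_lower_bound:
  assumes "levi_data N j b" "w \<in> Idn d N" "k \<in> {1..b}" "i \<in> {1..d}"
    and "x \<in> Bl j k" "x \<le> w ! (i - 1)"
  shows "(\<Sum>t=1..k-1. hcount w j t) + 1 \<le> i"
proof -
  have w: "sorted w" "length w = d"
    using assms(2) by (auto simp: Idn_def strict_sorted_imp_sorted)
  have "k - 1 \<le> b" "i - 1 < d" using assms(3,4) by auto
  have "(\<Sum>t=1..k-1. hcount w j t) = card {t. t < d \<and> w ! t \<in> {j 0<..j (k - 1)}}"
    using sum_hcount_eq_card[OF assms(1) _ \<open>k - 1 \<le> b\<close>, of 0 w] w(2) by simp
  also have "\<dots> \<le> card {t. t < d \<and> w ! t \<le> j (k - 1)}"
    by (intro card_mono) auto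
  also have "\<dots> \<le> i - 1"
    using card_nth_le_below_index[OF w(1), of "i - 1" "j (k - 1)"] \<open>i - 1 < d\<close> assms(5,6) w(2)
    by (simp add: Bl_def)
  finally show ?thesis using assms(4) by auto
qed

lemma entry_below_block_row_upper_bound:
  assumes "levi_data N j b" "k \<in> {1..b}" "i \<le> x" "\<forall>y\<in>Bl j k. x < y"
  shows "i \<le> (\<Sum>t=1..k-1. Nblk j t)"
proof -
  have "j (k - 1) + 1 \<in> Bl j k"
    using levi_data_block_nonempty[OF assms(1,2)] by (simp add: Bl_def)
  then have "x \<le> j (k - 1)" using assms(4) by fastforce
  moreover have "k - 1 \<le> b" using assms(2) by auto
  ultimately show ?thesis using sum_Nblk_eq[OF assms(1)] assms(3) by simp
qed

lemma entry_above_block_row_lower_bound: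
  assumes "levi_data N j b" "w \<in> Idn d N" "k \<in> {1..b}" "i \<in> {1..d}"
    and "\<forall>y\<in>Bl j k. y < x" "x \<le> w ! (i - 1)"
    and "(\<Sum>t=k+1..b. hcount w j t) < p"
  shows "d + 2 \<le> i + p"
proof -
  have w: "sorted w" "length w = d" "set w \<subseteq> {1..N}"
    using assms(2) by (auto simp: Idn_def strict_sorted_imp_sorted)
  have "i - 1 < d" using assms(4) by auto
  have "w ! t \<le> j b" if "t < d" for t
  proof -
    have "w ! t \<in> {1..N}" using w(2,3) that nth_mem by blast
    then show ?thesis using assms(1) by (simp add: levi_data_def)
  qed
  have "j k \<in> Bl j k"
    using levi_data_block_nonempty[OF assms(1,3)] by (simp add: Bl_def)
  then have "j k < w ! (i - 1)" using assms(5,6) by fastforce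
  then have "d - (i - 1) \<le> card {t. t < d \<and> j k < w ! t}"
    using card_nth_gt_from_index[OF w(1)] \<open>i - 1 < d\<close> w(2) by simp
  also have "\<dots> \<le> card {t. t < d \<and> w ! t \<in> {j k<..j b}}"
    using \<open>\<And>t. t < d \<Longrightarrow> w ! t \<le> j b\<close> by (intro card_mono) auto
  also have "\<dots> = (\<Sum>t=k+1..b. hcount w j t)"
    using sum_hcount_eq_card[OF assms(1), of k b w] assms(3) w(2) by simp
  finally show ?thesis using assms(4,7) by simp
qed

theorem corollary5p2:
  fixes w :: "nat list" and d N b k r :: nat and j :: "nat \<Rightarrow> nat"
    and ths :: "nat list list"
  assumes quad: "ls_quadruple w d N j b"
    and st: "ls_stable w N j b"
    and red: "reduced w N"
    and head: "std_head w d N j b r ths"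
    and k: "1 \<le> k" "k \<le> b"
  shows
    "(\<forall>i\<in>{1..d}. \<forall>c\<in>{1..r}. tab ths i c \<in> Bl j k \<longrightarrow>
        (\<Sum>t=1..k-1. hcount w j t) + 1 \<le> i)
     \<and> (\<forall>i\<in>{1..d}. \<forall>c\<in>{1..r}. (\<forall>y\<in>Bl j k. tab ths i c < y) \<longrightarrow>
        i \<le> (\<Sum>t=1..k-1. Nblk j t))
     \<and> (\<forall>p::nat. 0 < p \<longrightarrow> (\<Sum>t=k+1..b. hcount w j t) < p \<longrightarrow>
        (\<forall>i\<in>{1..d}. \<forall>c\<in>{1..r}. (\<forall>y\<in>Bl j k. y < tab ths i c) \<longrightarrow>
           d + 2 \<le> i + p))"
proof -
  have ld: "levi_data N j b" and wI: "w \<in> Idn d N"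
    using quad by (auto simp: ls_quadruple_def)
  have kb: "k \<in> {1..b}" using k by simp
  show ?thesis
  proof (intro conjI ballI allI impI)
    fix i c
    assume "i \<in> {1..d}" "c \<in> {1..r}" "tab ths i c \<in> Bl j k"
    then show "(\<Sum>t=1..k-1. hcount w j t) + 1 \<le> i"
      using entry_in_block_row_lower_bound[OF ld wI kb] std_head_tab_le[OF head] by blast
  next
    fix i c
    assume "i \<in> {1..d}" "c \<in> {1..r}" "\<forall>y\<in>Bl j k. tab ths i c < y"
    then show "i \<le> (\<Sum>t=1..k-1. Nblk j t)"
      using entry_below_block_row_upper_bound[OF ld kb] std_head_tab_ge_row[OF head] by blast
  next
    fix p i c
    assume "(\<Sum>t=k+1..b. hcount w j t) < p" "i \<in> {1..d}" "c \<in> {1..r}"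
      "\<forall>y\<in>Bl j k. y < tab ths i c"
    then show "d + 2 \<le> i + p"
      using entry_above_block_row_lower_bound[OF ld wI kb] std_head_tab_le[OF head] by blast
  qed
qed

end
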